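(* Let $\sim$ be an equivalence relation on $\mathbb{N}$ such that every equivalence class is finite, $\sim$ is computable, and there is an algorithm that given $x$ lists the equivalence class of $x$. Let $0<\gamma<1$. Then there exist an infinite binary sequence $\omega$ that follows $\sim$ and an integer $N$ such that for every finite set $A\subset\mathbb{N}$ with $\#_f A\ge N$ there exists $t\in A$ with $$K(\omega(A)\mid t)\ \ge\ \gamma\cdot\#_f A-K(A\mid t)-\log m(t).$$
   Context: $K(\cdot\mid\cdot)$ denotes conditional prefix Kolmogorov complexity (finite sets, numbers and strings encoded computably); $\log$ is base 2. A binary sequence $\omega$ follows $\sim$ if $\omega_i=\omega_j$ whenever $i\sim j$. For a finite $A\subset\mathbb{N}$, $\omega(A)$ is the binary string of length $\#A$ formed by the bits $\omega_i$, $i\in A$, in increasing order of $i$; $\#_f A$ (the number of free bits in $A$) is the number of equivalence classes of $\sim$ that intersect $A$; and $m(t)$ is the number of elements of the equivalence class of $t$. *)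

theory Defs
  imports Complex_Main "HOL-Library.Nat_Bijection"
begin

datatype recf = Z | S | Id nat | Cn recf "recf list" | Pr recf recf | Mn recf

text \<open>Relational (partial) semantics: eval f xs y means f on arguments xs halts with value y.\<close>
inductive eval :: "recf \<Rightarrow> nat list \<Rightarrow> nat \<Rightarrow> bool" where
  eval_Z: "eval Z xs 0"
| eval_S: "eval S (x # xs) (Suc x)"
| eval_Id: "i < length xs \<Longrightarrow> eval (Id i) xs (xs ! i)"
| eval_Cn: "list_all2 (\<lambda>g y. eval g xs y) gs ys \<Longrightarrow> eval f ys z \<Longrightarrow> eval (Cn f gs) xs z"
| eval_Pr0: "eval f xs z \<Longrightarrow> eval (Pr f g) (0 # xs) z"
| eval_PrS: "eval (Pr f g) (n # xs) r \<Longrightarrow> eval g (n # r # xs) z \<Longrightarrow> eval (Pr f g) (Suc n # xs) z"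
| eval_Mn: "eval f (y # xs) 0 \<Longrightarrow> (\<forall>z<y. \<exists>v>0. eval f (z # xs) v) \<Longrightarrow> eval (Mn f) xs y"

definition computable1 :: "(nat \<Rightarrow> nat) \<Rightarrow> bool" where
  "computable1 f \<longleftrightarrow> (\<exists>r. \<forall>x. eval r [x] (f x))"

definition decidable_rel :: "(nat \<Rightarrow> nat \<Rightarrow> bool) \<Rightarrow> bool" where
  "decidable_rel R \<longleftrightarrow> (\<exists>r. \<forall>x y. eval r [x, y] (if R x y then 1 else 0))"

text \<open>Computable bijection between binary strings and natural numbers.\<close>
fun bl_to_nat :: "bool list \<Rightarrow> nat" where
  "bl_to_nat [] = 0"
| "bl_to_nat (b # bs) = 2 * bl_to_nat bs + (if b then 2 else 1)"

text \<open>Finite sets of naturals are encoded by set_encode (HOL-Library.Nat_Bijection).\<close>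

text \<open>A conditional machine maps a program p and a condition y to an output (all objects
  encoded as natural numbers).\<close>
type_synonym machine = "bool list \<Rightarrow> nat \<Rightarrow> nat option"

definition prefix_machine :: "machine \<Rightarrow> bool" where
  "prefix_machine M \<longleftrightarrow>
     (\<exists>r. \<forall>p y z. eval r [bl_to_nat p, y] z \<longleftrightarrow> M p y = Some z) \<and>
     (\<forall>y p q. M p y \<noteq> None \<and> M q y \<noteq> None \<and> (\<exists>zs. q = p @ zs) \<longrightarrow> p = q)"

definition optimal_prefix_machine :: "machine \<Rightarrow> bool" where
  "optimal_prefix_machine U \<longleftrightarrow> prefix_machine U \<and>
     (\<forall>M. prefix_machine M \<longrightarrow>
        (\<exists>c. \<forall>p y x. M p y = Some x \<longrightarrow> (\<exists>q. U q y = Some x \<and> length q \<le> length p + c)))"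

definition KC :: "machine \<Rightarrow> nat \<Rightarrow> nat \<Rightarrow> nat" where
  "KC U x y = (LEAST n. \<exists>p. length p = n \<and> U p y = Some x)"

definition follows :: "(nat \<Rightarrow> nat \<Rightarrow> bool) \<Rightarrow> (nat \<Rightarrow> bool) \<Rightarrow> bool" where
  "follows R \<omega> \<longleftrightarrow> (\<forall>i j. R i j \<longrightarrow> \<omega> i = \<omega> j)"

definition restrict_seq :: "(nat \<Rightarrow> bool) \<Rightarrow> nat set \<Rightarrow> bool list" where
  "restrict_seq \<omega> A = map \<omega> (sorted_list_of_set A)"

definition eq_class :: "(nat \<Rightarrow> nat \<Rightarrow> bool) \<Rightarrow> nat \<Rightarrow> nat set" where
  "eq_class R x = {y. R x y}"

definition free_bits :: "(nat \<Rightarrow> nat \<Rightarrow> bool) \<Rightarrow> nat set \<Rightarrow> nat" where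
  "free_bits R A = card {C \<in> range (eq_class R). C \<inter> A \<noteq> {}}"

definition class_size :: "(nat \<Rightarrow> nat \<Rightarrow> bool) \<Rightarrow> nat \<Rightarrow> nat" where
  "class_size R t = card (eq_class R t)"

end

theory Submission
  imports Defs "HOL-Probability.Product_PMF" "HOL-Real_Asymp.Real_Asymp"
begin

(* Assign independent fair bits c(v) to the class representatives v = rep i (the least
   element of the class of i) and copy them to the whole class: omega i = c (rep i).  Such
   an omega follows R automatically, and its restriction omega(A) is determined by the
   f(A) = #_f A bits of c on the representatives of A.
   For a finite A let bad(A) be the event that every t in A violates the bound.  Counting
   programs (Kraft's inequality for the optimal prefix machine) shows
   P(bad A) <= 2^(bound(A,t) - f(A)) for each t in A.  Writing gamma = 1 - 2 delta and
   giving A the weight x(A) = 2^(-delta f(A)) min_t 2^(-K(A|t))/m(t), Kraft's inequality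
   again bounds the total weight of the sets sharing a representative with A by
   2^(-delta N) f(A).  For N large this verifies the asymmetric Lovasz Local Lemma for
   every finite family of bad events with f >= N; a compactness argument on the Cantor
   space then yields one assignment c avoiding all of them at once. *)

section \<open>The optimal machine and Kraft's inequality\<close>

fun const_recf :: "nat \<Rightarrow> recf" where
  "const_recf 0 = Z"
| "const_recf (Suc n) = Cn S [const_recf n]"

lemma eval_const_recf: "eval (const_recf n) [w] z \<longleftrightarrow> z = n"
proof (induction n arbitrary: z)
  case 0
  then show ?case by (auto elim: eval.cases intro: eval.intros)
next
  case (Suc n)
  show ?case
  proof
    assume "eval (const_recf (Suc n)) [w] z"
    then obtain ys where "list_all2 (\<lambda>g y. eval g [w] y) [const_recf n] ys" "eval S ys z"
      by (auto elim: eval.cases)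
    then show "z = Suc n" using Suc by (auto elim: eval.cases simp: list_all2_Cons1)
  next
    assume "z = Suc n"
    then show "eval (const_recf (Suc n)) [w] z" using Suc
      by (auto intro!: eval_Cn[where ys = "[n]"] eval.intros)
  qed
qed

lemma eval_zero_test: "eval (Mn (Id 1)) [v, y] w \<longleftrightarrow> v = 0 \<and> w = 0"
proof
  assume "eval (Mn (Id 1)) [v, y] w"
  then have hit: "eval (Id 1) [w, v, y] 0" and before: "\<forall>z<w. \<exists>u>0. eval (Id 1) [z, v, y] u"
    by (auto elim: eval.cases)
  from hit have "v = 0" by (auto elim: eval.cases)
  moreover have "w = 0"
  proof (rule ccontr)
    assume "w \<noteq> 0"
    with before obtain u where "u > 0" "eval (Id 1) [0, v, y] u" by auto
    then show False using \<open>v = 0\<close> by (auto elim: eval.cases)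
  qed
  ultimately show "v = 0 \<and> w = 0" ..
next
  assume "v = 0 \<and> w = 0"
  then show "eval (Mn (Id 1)) [v, y] w"
    using eval_Id[of 1 "[0, 0, y]"] by (auto intro!: eval_Mn)
qed

text \<open>A program that outputs x on input 0 (the code of the empty program) and diverges
  otherwise, for every condition.\<close>
lemma eval_const_on_empty: "eval (Cn (const_recf x) [Mn (Id 1)]) [v, y] z \<longleftrightarrow> v = 0 \<and> z = x"
proof
  assume "eval (Cn (const_recf x) [Mn (Id 1)]) [v, y] z"
  then obtain ys where "list_all2 (\<lambda>g u. eval g [v, y] u) [Mn (Id 1)] ys" "eval (const_recf x) ys z"
    by (auto elim: eval.cases)
  then obtain w where "eval (Mn (Id 1)) [v, y] w" "eval (const_recf x) [w] z"
    by (auto simp: list_all2_Cons1)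
  then show "v = 0 \<and> z = x" using eval_zero_test eval_const_recf by metis
next
  assume "v = 0 \<and> z = x"
  then show "eval (Cn (const_recf x) [Mn (Id 1)]) [v, y] z"
    using eval_zero_test[of 0 y 0] eval_const_recf[of x 0 x]
    by (auto intro!: eval_Cn[where ys = "[0]"])
qed

lemma bl_to_nat_eq_0_iff: "bl_to_nat p = 0 \<longleftrightarrow> p = []"
  by (cases p) auto

lemma inj_bl_to_nat: "inj bl_to_nat"
proof -
  have "\<forall>q. bl_to_nat p = bl_to_nat q \<longrightarrow> p = q" for p
  proof (induction p)
    case Nil
    then show ?case using bl_to_nat_eq_0_iff by metis
  next
    case (Cons b bs)
    show ?case
    proof (intro allI impI)
      fix q assume eq: "bl_to_nat (b # bs) = bl_to_nat q"
      then obtain c cs where q: "q = c # cs" by (cases q) (auto split: if_splits)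
      from eq q have "b = c" by (auto split: if_splits; presburger)
      with eq q Cons show "b # bs = q" by auto
    qed
  qed
  then show ?thesis by (auto simp: inj_def)
qed

text \<open>Every object has a program for every condition: simulate the machine printing x
  on the empty program.\<close>
lemma optimal_machine_total:
  assumes "optimal_prefix_machine U"
  shows "\<exists>p. U p y = Some x"
proof -
  define M :: machine where "M = (\<lambda>p y. if p = [] then Some x else None)"
  have "prefix_machine M"
    unfolding prefix_machine_def
  proof
    show "\<exists>r. \<forall>p y z. eval r [bl_to_nat p, y] z = (M p y = Some z)"
      by (rule exI[of _ "Cn (const_recf x) [Mn (Id 1)]"], intro allI, subst eval_const_on_empty)
        (auto simp: M_def bl_to_nat_eq_0_iff)
    show "\<forall>y p q. M p y \<noteq> None \<and> M q y \<noteq> None \<and> (\<exists>zs. q = p @ zs) \<longrightarrow> p = q"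
      by (simp add: M_def)
  qed
  with assms obtain c where
    "\<forall>p y x'. M p y = Some x' \<longrightarrow> (\<exists>q. U q y = Some x' \<and> length q \<le> length p + c)"
    unfolding optimal_prefix_machine_def by blast
  moreover have "M [] y = Some x" by (simp add: M_def)
  ultimately show ?thesis by blast
qed

lemma KC_attained:
  assumes "optimal_prefix_machine U"
  shows "\<exists>p. length p = KC U x y \<and> U p y = Some x"
proof -
  obtain p where "U p y = Some x" using optimal_machine_total[OF assms] by blast
  then have "\<exists>n p. length p = n \<and> U p y = Some x" by blast
  from LeastI_ex[OF this] show ?thesis unfolding KC_def .
qed

definition prefix_free :: "bool list set \<Rightarrow> bool" where
  "prefix_free P \<longleftrightarrow> (\<forall>p\<in>P. \<forall>q\<in>P. (\<exists>zs. q = p @ zs) \<longrightarrow> p = q)"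

lemma card_extensions:
  assumes "length p \<le> n"
  shows "card {q :: bool list. length q = n \<and> (\<exists>zs. q = p @ zs)} = 2 ^ (n - length p)"
proof -
  have "{q :: bool list. length q = n \<and> (\<exists>zs. q = p @ zs)} = (@) p ` {zs. length zs = n - length p}"
    using assms by auto
  moreover have "card {zs :: bool list. length zs = n - length p} = 2 ^ (n - length p)"
    using card_lists_length_eq[of "UNIV :: bool set" "n - length p"] by simp
  ultimately show ?thesis by (simp add: card_image inj_on_def)
qed

text \<open>Kraft's inequality: the extensions of the words of a prefix-free set to a common
  length are pairwise disjoint.\<close>
lemma kraft_inequality:
  assumes fin: "finite P" and pf: "prefix_free P"
  shows "(\<Sum>p\<in>P. (1/2::real) ^ length p) \<le> 1"
proof -
  define n where "n = Max (length ` P)"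
  define ext where "ext p = {q :: bool list. length q = n \<and> (\<exists>zs. q = p @ zs)}" for p
  have len: "length p \<le> n" if "p \<in> P" for p
    using fin that by (simp add: n_def)
  have disj: "ext p \<inter> ext q = {}" if "p \<in> P" "q \<in> P" "p \<noteq> q" for p q
  proof -
    have "r \<notin> ext q" if "r \<in> ext p" for r
    proof
      assume "r \<in> ext q"
      with \<open>r \<in> ext p\<close> obtain zs ws where "r = p @ zs" "r = q @ ws"
        unfolding ext_def by blast
      then have "(\<exists>us. p = q @ us) \<or> (\<exists>us. q = p @ us)" by (auto simp: append_eq_append_conv2)
      with pf \<open>p \<in> P\<close> \<open>q \<in> P\<close> \<open>p \<noteq> q\<close> show False unfolding prefix_free_def by metis
    qed
    then show ?thesis by blast
  qed
  have fin_ext: "finite (ext p)" for p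
    using finite_lists_length_eq[of "UNIV :: bool set" n] unfolding ext_def by simp
  have "(\<Sum>p\<in>P. 2 ^ (n - length p)) = card (\<Union>p\<in>P. ext p)"
    using card_UN_disjoint[OF fin _ , of ext] fin_ext disj len
    by (simp add: ext_def card_extensions)
  also have "\<dots> \<le> card {q :: bool list. length q = n}"
    using finite_lists_length_eq[of "UNIV :: bool set" n] by (intro card_mono) (auto simp: ext_def)
  also have "\<dots> = 2 ^ n"
    using card_lists_length_eq[of "UNIV :: bool set" n] by simp
  finally have count: "(\<Sum>p\<in>P. 2 ^ (n - length p)) \<le> (2::nat) ^ n" .
  have "(\<Sum>p\<in>P. (1/2::real) ^ length p) = (\<Sum>p\<in>P. 2 ^ (n - length p)) / 2 ^ n"
    by (simp add: sum_divide_distrib power_diff len power_one_over)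
  also have "\<dots> \<le> 1" using of_nat_mono[OF count, where 'a = real] by simp
  finally show ?thesis .
qed

lemma KC_kraft:
  assumes U: "optimal_prefix_machine U" and fin: "finite X"
  shows "(\<Sum>x\<in>X. (1/2::real) ^ KC U x y) \<le> 1"
proof -
  define prog where "prog x = (SOME p. length p = KC U x y \<and> U p y = Some x)" for x
  have prog: "length (prog x) = KC U x y \<and> U (prog x) y = Some x" for x
    unfolding prog_def using someI_ex[OF KC_attained[OF U]] .
  have inj: "inj_on prog X"
    by (rule inj_onI) (metis prog option.inject)
  have "prefix_machine U" using U unfolding optimal_prefix_machine_def by blast
  then have "prefix_free (prog ` X)"
    unfolding prefix_machine_def prefix_free_def using prog by (metis imageE option.distinct(1))
  then have "(\<Sum>p\<in>prog ` X. (1/2::real) ^ length p) \<le> 1"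
    using fin by (intro kraft_inequality) auto
  then show ?thesis by (simp add: sum.reindex[OF inj] prog)
qed

lemma two_powr_minus_nat: "2 powr (- real n) = (1/2::real) ^ n"
  by (simp add: powr_minus_divide powr_realpow power_divide)

lemma KC_count:
  assumes U: "optimal_prefix_machine U" and fin: "finite X"
    and low: "\<forall>x\<in>X. real (KC U x y) < L"
  shows "real (card X) \<le> 2 powr L"
proof -
  have "real (card X) * 2 powr (-L) = (\<Sum>x\<in>X. 2 powr (-L))" by simp
  also have "\<dots> \<le> (\<Sum>x\<in>X. (1/2::real) ^ KC U x y)"
  proof (rule sum_mono)
    fix x assume "x \<in> X"
    then have "2 powr (-L) \<le> 2 powr (- real (KC U x y))" using low by (intro powr_mono) auto
    then show "2 powr (-L) \<le> (1/2::real) ^ KC U x y"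
      by (simp add: two_powr_minus_nat)
  qed
  also have "\<dots> \<le> 1" by (rule KC_kraft[OF U fin])
  finally show ?thesis by (simp add: powr_minus field_simps)
qed

section \<open>Random bit assignments\<close>

definition depends_on :: "nat set \<Rightarrow> (nat \<Rightarrow> bool) set \<Rightarrow> bool" where
  "depends_on Sv X \<longleftrightarrow> (\<forall>c c'. (\<forall>v\<in>Sv. c v = c' v) \<longrightarrow> (c \<in> X \<longleftrightarrow> c' \<in> X))"

lemma depends_on_mono: "depends_on Sv X \<Longrightarrow> Sv \<subseteq> T \<Longrightarrow> depends_on T X"
  unfolding depends_on_def by blast

lemma depends_on_Compl: "depends_on Sv X \<Longrightarrow> depends_on Sv (- X)"
  unfolding depends_on_def by blast

lemma depends_on_INT: "(\<And>j. j \<in> J \<Longrightarrow> depends_on Sv (X j)) \<Longrightarrow> depends_on Sv (\<Inter>j\<in>J. X j)"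
  unfolding depends_on_def by blast

definition coins :: "nat set \<Rightarrow> (nat \<Rightarrow> bool) pmf" where
  "coins W = Pi_pmf W False (\<lambda>_. pmf_of_set UNIV)"

abbreviation Prob :: "nat set \<Rightarrow> (nat \<Rightarrow> bool) set \<Rightarrow> real" where
  "Prob W X \<equiv> measure_pmf.prob (coins W) X"

text \<open>Product rule for arbitrary (possibly uncountable) rectangles.\<close>
lemma prob_pair_times:
  "measure_pmf.prob (pair_pmf M N) (A \<times> B) = measure_pmf.prob M A * measure_pmf.prob N B"
proof -
  have "measure_pmf.prob (pair_pmf M N) (A \<times> B) =
        measure_pmf.prob (pair_pmf M N) ((A \<times> B) \<inter> set_pmf (pair_pmf M N))"
    by (rule measure_Int_set_pmf[symmetric])
  also have "(A \<times> B) \<inter> set_pmf (pair_pmf M N) = (A \<inter> set_pmf M) \<times> (B \<inter> set_pmf N)"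
    by auto
  also have "measure_pmf.prob (pair_pmf M N) \<dots> =
       measure_pmf.prob M (A \<inter> set_pmf M) * measure_pmf.prob N (B \<inter> set_pmf N)"
    by (rule measure_pmf_prob_product) (auto intro: countable_subset)
  also have "\<dots> = measure_pmf.prob M A * measure_pmf.prob N B"
    by (simp add: measure_Int_set_pmf)
  finally show ?thesis .
qed

lemma prob_indep:
  assumes W: "finite W" and Sv: "Sv \<subseteq> W"
    and X: "depends_on Sv X" and Y: "depends_on (W - Sv) Y"
  shows "Prob W (X \<inter> Y) = Prob W X * Prob W Y"
proof -
  define glue :: "(nat \<Rightarrow> bool) \<times> (nat \<Rightarrow> bool) \<Rightarrow> nat \<Rightarrow> bool"
    where "glue = (\<lambda>(f, g) x. if x \<in> Sv then f x else g x)"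
  have "coins W = coins (Sv \<union> (W - Sv))" using Sv by (simp add: Un_absorb1)
  also have "\<dots> = map_pmf glue (pair_pmf (coins Sv) (coins (W - Sv)))"
    unfolding coins_def glue_def using W Sv finite_subset by (intro Pi_pmf_union) auto
  finally have split: "coins W = map_pmf glue (pair_pmf (coins Sv) (coins (W - Sv)))" .
  have "glue (f, g) \<in> X \<longleftrightarrow> f \<in> X" for f g
    using X unfolding depends_on_def glue_def by (metis (no_types, lifting) case_prod_conv)
  moreover have "glue (f, g) \<in> Y \<longleftrightarrow> g \<in> Y" for f g
    using Y unfolding depends_on_def glue_def by (metis (no_types, lifting) DiffD2 case_prod_conv)
  ultimately have "glue -` (X \<inter> Y) = X \<times> Y" and "glue -` X = X \<times> UNIV"
    and "glue -` Y = UNIV \<times> Y" by auto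
  then show ?thesis
    unfolding split measure_map_pmf by (simp only: prob_pair_times) simp
qed

lemma prob_restrict:
  assumes W: "finite W" and Sv: "Sv \<subseteq> W" and X: "depends_on Sv X"
  shows "Prob W X = Prob Sv X"
proof -
  define cut :: "(nat \<Rightarrow> bool) \<Rightarrow> nat \<Rightarrow> bool" where "cut f x = (if x \<in> Sv then f x else False)" for f x
  have "coins Sv = map_pmf cut (coins W)"
    unfolding coins_def cut_def by (rule Pi_pmf_subset[OF W Sv])
  then have "Prob Sv X = Prob W (cut -` X)" by simp
  also have "cut -` X = X"
  proof (rule set_eqI)
    fix f
    have "\<forall>v\<in>Sv. cut f v = f v" unfolding cut_def by simp
    then show "f \<in> cut -` X \<longleftrightarrow> f \<in> X" using X unfolding depends_on_def by auto
  qed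
  finally show ?thesis by simp
qed

lemma set_pmf_coins: "finite V \<Longrightarrow> set_pmf (coins V) \<subseteq> {f. \<forall>x. x \<notin> V \<longrightarrow> f x = False}"
  unfolding coins_def by (rule set_Pi_pmf_subset)

lemma finite_set_pmf_coins: "finite V \<Longrightarrow> finite (set_pmf (coins V))"
  unfolding coins_def by (simp add: set_Pi_pmf finite_PiE_dflt)

text \<open>Probabilities under fair coins are counts: every outcome has weight 2^-|V|.\<close>
lemma prob_count:
  assumes V: "finite V"
  shows "Prob V X = real (card (X \<inter> set_pmf (coins V))) * (1/2) ^ card V"
proof -
  have "Prob V X = Prob V (X \<inter> set_pmf (coins V))" by (simp add: measure_Int_set_pmf)
  also have "\<dots> = (\<Sum>c\<in>X \<inter> set_pmf (coins V). pmf (coins V) c)"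
    using finite_set_pmf_coins[OF V] by (intro measure_measure_pmf_finite) simp
  also have "\<dots> = (\<Sum>c\<in>X \<inter> set_pmf (coins V). (1/2) ^ card V)"
  proof (rule sum.cong[OF refl])
    fix c assume "c \<in> X \<inter> set_pmf (coins V)"
    then have "\<forall>x. x \<notin> V \<longrightarrow> c x = False" using set_pmf_coins[OF V] by blast
    then have "pmf (coins V) c = (\<Prod>x\<in>V. pmf (pmf_of_set (UNIV::bool set)) (c x))"
      unfolding coins_def using V by (intro pmf_Pi') auto
    then show "pmf (coins V) c = (1/2) ^ card V" by simp
  qed
  finally show ?thesis by simp
qed

section \<open>The Lovasz Local Lemma\<close>

definition avoid :: "nat set \<Rightarrow> ('i \<Rightarrow> (nat \<Rightarrow> bool) set) \<Rightarrow> 'i set \<Rightarrow> real" where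
  "avoid W E U = Prob W (\<Inter>j\<in>U. - E j)"

lemma avoid_split: "avoid W E U - avoid W E (insert i U) = Prob W (E i \<inter> (\<Inter>j\<in>U. - E j))"
proof -
  have "Prob W ((\<Inter>j\<in>U. - E j) - E i) = Prob W (\<Inter>j\<in>U. - E j) - Prob W ((\<Inter>j\<in>U. - E j) \<inter> E i)"
    by (rule measure_pmf.finite_measure_Diff') auto
  moreover have "(\<Inter>j\<in>U. - E j) - E i = (\<Inter>j\<in>insert i U. - E j)" by auto
  ultimately show ?thesis unfolding avoid_def by (simp add: Int_commute)
qed

lemma avoid_chain:
  assumes fin: "finite F" and UF: "U \<subseteq> F"
    and step: "\<And>U' i. U' \<subseteq> F \<Longrightarrow> card U' < card U \<Longrightarrow> i \<in> F - U' \<Longrightarrow>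
               avoid W E (insert i U') \<ge> (1 - x i) * avoid W E U'"
    and x: "\<forall>i\<in>F. 0 \<le> x i \<and> x i < 1"
    and D: "D \<subseteq> U"
  shows "avoid W E U \<ge> (\<Prod>j\<in>D. 1 - x j) * avoid W E (U - D)"
proof -
  have finU: "finite U" using UF fin by (rule finite_subset)
  from finite_subset[OF D finU] D show ?thesis
  proof (induction D rule: finite_induct)
    case empty
    then show ?case by simp
  next
    case (insert j D)
    have jU: "j \<in> U" and DU: "D \<subseteq> U" using insert.prems by auto
    have eq: "U - D = insert j (U - insert j D)" using jU insert.hyps(2) by blast
    have "card (U - insert j D) < card U"
      by (rule psubset_card_mono[OF finU]) (use jU in blast)
    then have "avoid W E (U - D) \<ge> (1 - x j) * avoid W E (U - insert j D)"
      unfolding eq using UF jU by (intro step) auto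
    moreover have "(\<Prod>j\<in>D. 1 - x j) \<ge> 0"
      using x DU UF by (intro prod_nonneg) force
    ultimately have "(\<Prod>j\<in>D. 1 - x j) * ((1 - x j) * avoid W E (U - insert j D))
        \<le> (\<Prod>j\<in>D. 1 - x j) * avoid W E (U - D)"
      by (rule mult_left_mono)
    also have "\<dots> \<le> avoid W E U" by (rule insert.IH[OF DU])
    finally show ?case using insert.hyps by (simp add: mult_ac)
  qed
qed

lemma prod_one_minus_antimono:
  fixes x :: "'i \<Rightarrow> real"
  assumes "finite M" "N \<subseteq> M" "\<forall>j\<in>M. 0 \<le> x j \<and> x j \<le> 1"
  shows "(\<Prod>j\<in>M. 1 - x j) \<le> (\<Prod>j\<in>N. 1 - x j)"
proof -
  have "(\<Prod>j\<in>M. 1 - x j) = (\<Prod>j\<in>N. 1 - x j) * (\<Prod>j\<in>M - N. 1 - x j)"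
    using prod.subset_diff[OF assms(2,1)] by (simp add: mult_ac)
  also have "\<dots> \<le> (\<Prod>j\<in>N. 1 - x j) * 1"
    using assms by (intro mult_left_mono prod_le_1 prod_nonneg) auto
  finally show ?thesis by simp
qed

lemma lll_step:
  fixes F :: "'i set" and V :: "'i \<Rightarrow> nat set" and E :: "'i \<Rightarrow> (nat \<Rightarrow> bool) set"
  assumes W: "finite W" and fin: "finite F"
    and VW: "\<forall>i\<in>F. V i \<subseteq> W" and dep: "\<forall>i\<in>F. depends_on (V i) (E i)"
    and x: "\<forall>i\<in>F. 0 \<le> x i \<and> x i < 1"
    and P: "\<forall>i\<in>F. Prob W (E i) \<le> x i * (\<Prod>j\<in>{j\<in>F. j \<noteq> i \<and> V j \<inter> V i \<noteq> {}}. 1 - x j)"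
  shows "U \<subseteq> F \<Longrightarrow> i \<in> F - U \<Longrightarrow> avoid W E (insert i U) \<ge> (1 - x i) * avoid W E U"
proof (induction "card U" arbitrary: U i rule: less_induct)
  case less
  have iF: "i \<in> F" using less.prems by auto
  define N where "N = {j\<in>U. V j \<inter> V i \<noteq> {}}"
  define U' where "U' = U - N"
  have NU: "N \<subseteq> U" unfolding N_def by auto
  have chain: "avoid W E U \<ge> (\<Prod>j\<in>N. 1 - x j) * avoid W E U'"
    unfolding U'_def by (rule avoid_chain[OF fin less.prems(1) _ x NU]) (rule less.hyps; auto)
  have indep_part: "depends_on (W - V i) (\<Inter>j\<in>U'. - E j)"
  proof (intro depends_on_INT depends_on_Compl)
    fix j assume "j \<in> U'"
    then have "j \<in> F" "V j \<inter> V i = {}" using less.prems unfolding U'_def N_def by auto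
    then show "depends_on (W - V i) (E j)" using VW dep depends_on_mono by blast
  qed
  have neighbours: "Prob W (E i) \<le> x i * (\<Prod>j\<in>N. 1 - x j)"
  proof -
    have "(\<Prod>j\<in>{j\<in>F. j \<noteq> i \<and> V j \<inter> V i \<noteq> {}}. 1 - x j) \<le> (\<Prod>j\<in>N. 1 - x j)"
      using less.prems fin x by (intro prod_one_minus_antimono) (auto simp: N_def)
    then show ?thesis using P iF x by (meson mult_left_mono order_trans)
  qed
  have "avoid W E U - avoid W E (insert i U) = Prob W (E i \<inter> (\<Inter>j\<in>U. - E j))"
    by (rule avoid_split)
  also have "\<dots> \<le> Prob W (E i \<inter> (\<Inter>j\<in>U'. - E j))"
    by (rule measure_pmf.finite_measure_mono) (auto simp: U'_def)
  also have "\<dots> = Prob W (E i) * avoid W E U'"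
    unfolding avoid_def using prob_indep[OF W _ _ indep_part] VW dep iF by auto
  also have "\<dots> \<le> x i * (\<Prod>j\<in>N. 1 - x j) * avoid W E U'"
    by (rule mult_right_mono[OF neighbours]) (simp add: avoid_def)
  also have "\<dots> \<le> x i * avoid W E U"
    using mult_left_mono[OF chain, of "x i"] x iF by (simp add: mult.assoc)
  finally show ?case by (simp add: algebra_simps)
qed

lemma lovasz_local_lemma:
  fixes F :: "'i set" and V :: "'i \<Rightarrow> nat set" and E :: "'i \<Rightarrow> (nat \<Rightarrow> bool) set"
  assumes W: "finite W" and fin: "finite F"
    and VW: "\<forall>i\<in>F. V i \<subseteq> W" and dep: "\<forall>i\<in>F. depends_on (V i) (E i)"
    and x: "\<forall>i\<in>F. 0 \<le> x i \<and> x i < 1"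
    and P: "\<forall>i\<in>F. Prob W (E i) \<le> x i * (\<Prod>j\<in>{j\<in>F. j \<noteq> i \<and> V j \<inter> V i \<noteq> {}}. 1 - x j)"
  shows "Prob W (\<Inter>i\<in>F. - E i) \<ge> (\<Prod>i\<in>F. 1 - x i)"
proof -
  have "avoid W E F \<ge> (\<Prod>j\<in>F. 1 - x j) * avoid W E (F - F)"
    by (rule avoid_chain[OF fin order_refl _ x order_refl]) (rule lll_step[OF assms]; auto)
  then show ?thesis unfolding avoid_def by simp
qed

section \<open>Compactness of the space of assignments\<close>

definition extendable :: "(nat \<Rightarrow> (nat \<Rightarrow> bool) set) \<Rightarrow> (nat \<Rightarrow> bool) \<Rightarrow> nat \<Rightarrow> bool" where
  "extendable C \<sigma> n \<longleftrightarrow> (\<forall>k. \<exists>c\<in>C k. \<forall>i<n. c i = \<sigma> i)"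

lemma extendable_step:
  assumes mono: "\<And>k k'. k \<le> k' \<Longrightarrow> C k' \<subseteq> C k" and ext: "extendable C \<sigma> n"
  shows "extendable C (\<sigma>(n := True)) (Suc n) \<or> extendable C (\<sigma>(n := False)) (Suc n)"
proof (rule ccontr)
  assume neither: "\<not> ?thesis"
  then have "\<not> extendable C (\<sigma>(n := True)) (Suc n)" by simp
  then obtain k1 where k1: "\<not> (\<exists>c\<in>C k1. \<forall>i<Suc n. c i = (\<sigma>(n := True)) i)"
    unfolding extendable_def by blast
  from neither have "\<not> extendable C (\<sigma>(n := False)) (Suc n)" by simp
  then obtain k2 where k2: "\<not> (\<exists>c\<in>C k2. \<forall>i<Suc n. c i = (\<sigma>(n := False)) i)"
    unfolding extendable_def by blast
  from ext obtain c where c: "c \<in> C (max k1 k2)" "\<forall>i<n. c i = \<sigma> i"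
    unfolding extendable_def by blast
  have "c \<in> C k1" "c \<in> C k2" using c(1) mono by (meson max.cobounded1 max.cobounded2 subsetD)+
  moreover have "\<forall>i<Suc n. c i = (\<sigma>(n := c n)) i" using c(2) less_Suc_eq by auto
  ultimately show False using k1 k2 by (cases "c n") auto
qed

lemma compact_nested:
  fixes C :: "nat \<Rightarrow> (nat \<Rightarrow> bool) set"
  assumes ne: "\<And>k. C k \<noteq> {}" and mono: "\<And>k k'. k \<le> k' \<Longrightarrow> C k' \<subseteq> C k"
    and findep: "\<And>k. \<exists>M. finite M \<and> depends_on M (C k)"
  shows "\<exists>c. \<forall>k. c \<in> C k"
proof -
  define next_bit where "next_bit n s =
      (if extendable C (s(n := True)) (Suc n) then s(n := True) else s(n := False))"
    for n and s :: "nat \<Rightarrow> bool"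
  define pfx where "pfx = rec_nat (\<lambda>_. False) next_bit"
  have pfx_Suc: "pfx (Suc n) = next_bit n (pfx n)" for n
    unfolding pfx_def by simp
  have ext: "extendable C (pfx n) n" for n
  proof (induction n)
    case 0
    show ?case using ne unfolding extendable_def by blast
  next
    case (Suc n)
    then show ?case
      using extendable_step[OF mono Suc] unfolding pfx_Suc next_bit_def by auto
  qed
  have stable: "pfx n i = pfx (Suc i) i" if "i < n" for n i
    using that
  proof (induction n)
    case (Suc n)
    then show ?case by (cases "i = n") (auto simp: pfx_Suc next_bit_def)
  qed simp
  define \<omega> where "\<omega> i = pfx (Suc i) i" for i
  have "\<omega> \<in> C k" for k
  proof -
    obtain M where M: "finite M" "depends_on M (C k)" using findep by blast
    obtain n where n: "M \<subseteq> {..<n}" using finite_nat_bounded[OF M(1)] by blast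
    obtain c where c: "c \<in> C k" "\<forall>i<n. c i = pfx n i" using ext[of n] unfolding extendable_def by blast
    have "c v = \<omega> v" if "v \<in> M" for v
      using that n c(2) stable[of v n] unfolding \<omega>_def by auto
    then show ?thesis using M(2) c(1) unfolding depends_on_def by blast
  qed
  then show ?thesis by blast
qed

section \<open>Class representatives\<close>

definition rep :: "(nat \<Rightarrow> nat \<Rightarrow> bool) \<Rightarrow> nat \<Rightarrow> nat" where
  "rep R i = (LEAST j. R i j)"

definition spread :: "(nat \<Rightarrow> nat \<Rightarrow> bool) \<Rightarrow> (nat \<Rightarrow> bool) \<Rightarrow> nat \<Rightarrow> bool" where
  "spread R c i = c (rep R i)"

lemma rep_related: "equivp R \<Longrightarrow> R i (rep R i)"
  unfolding rep_def by (rule LeastI[of _ i]) (simp add: equivp_reflp)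

lemma rep_eq_iff:
  assumes "equivp R" shows "rep R i = rep R j \<longleftrightarrow> R i j"
proof -
  have "R i = R (rep R i)" "R j = R (rep R j)"
    using rep_related[OF assms] assms by (metis equivp_def)+
  then show ?thesis unfolding rep_def using assms by (metis equivp_def)
qed

lemma rep_rep: "equivp R \<Longrightarrow> rep R (rep R i) = rep R i"
  using rep_eq_iff rep_related by metis

lemma eq_class_rep: "equivp R \<Longrightarrow> eq_class R i = {s. rep R s = rep R i}"
  unfolding eq_class_def using rep_eq_iff by (metis equivp_symp)

lemma follows_spread: "equivp R \<Longrightarrow> follows R (spread R c)"
  unfolding follows_def spread_def using rep_eq_iff by metis

lemma eq_class_eq_iff:
  assumes E: "equivp R" shows "eq_class R x = eq_class R y \<longleftrightarrow> rep R x = rep R y"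
proof
  assume "eq_class R x = eq_class R y"
  then have "{s. rep R s = rep R x} = {s. rep R s = rep R y}" by (simp add: eq_class_rep[OF E])
  then show "rep R x = rep R y" by blast
qed (simp add: eq_class_rep[OF E])

lemma free_bits_rep:
  assumes E: "equivp R" shows "free_bits R A = card (rep R ` A)"
proof -
  have "{C \<in> range (eq_class R). C \<inter> A \<noteq> {}} = eq_class R ` A"
  proof (intro equalityI subsetI)
    fix C assume "C \<in> {C \<in> range (eq_class R). C \<inter> A \<noteq> {}}"
    then obtain y a where C: "C = eq_class R y" and a: "a \<in> C" "a \<in> A" by blast
    then have "rep R a = rep R y" by (simp add: eq_class_rep[OF E])
    then show "C \<in> eq_class R ` A" using C a(2) eq_class_eq_iff[OF E] by blast
  next
    fix C assume "C \<in> eq_class R ` A"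
    then obtain a where "a \<in> A" "C = eq_class R a" by blast
    moreover have "a \<in> eq_class R a" by (simp add: eq_class_rep[OF E])
    ultimately show "C \<in> {C \<in> range (eq_class R). C \<inter> A \<noteq> {}}" by blast
  qed
  also have "\<dots> = eq_class R ` rep R ` A"
    unfolding image_image using eq_class_eq_iff[OF E] rep_rep[OF E] by (intro image_cong) auto
  finally have classes: "{C \<in> range (eq_class R). C \<inter> A \<noteq> {}} = eq_class R ` rep R ` A" .
  have "inj_on (eq_class R) (rep R ` A)"
    by (rule inj_onI) (auto simp: eq_class_eq_iff[OF E] rep_rep[OF E])
  then show ?thesis unfolding free_bits_def classes by (rule card_image)
qed

lemma class_size_pos:
  assumes "equivp R" "\<forall>x. finite (eq_class R x)"
  shows "class_size R t \<ge> 1"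
proof -
  have "t \<in> eq_class R t" unfolding eq_class_def using assms by (simp add: equivp_reflp)
  then show ?thesis unfolding class_size_def using assms
    by (metis One_nat_def Suc_leI card_gt_0_iff empty_iff)
qed

lemma sum_inverse_class_size:
  assumes E: "equivp R" and fc: "\<forall>x. finite (eq_class R x)"
  shows "(\<Sum>s\<in>eq_class R a. 1 / real (class_size R s)) = 1"
proof -
  have "class_size R s = class_size R a" if "s \<in> eq_class R a" for s
    using that eq_class_rep[OF E] unfolding class_size_def by auto
  then have "(\<Sum>s\<in>eq_class R a. 1 / real (class_size R s)) = card (eq_class R a) / real (class_size R a)"
    by simp
  also have "\<dots> = 1" using class_size_pos[OF E fc, of a] unfolding class_size_def by simp
  finally show ?thesis .
qed

lemma restrict_seq_spread:
  "restrict_seq (spread R c) A = map (\<lambda>i. c (rep R i)) (sorted_list_of_set A)"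
  unfolding restrict_seq_def spread_def by simp

lemma depends_on_restrict_seq:
  assumes "finite A" "\<forall>v\<in>rep R ` A. c v = c' v"
  shows "restrict_seq (spread R c) A = restrict_seq (spread R c') A"
  unfolding restrict_seq_spread using assms by (intro map_cong) auto

lemma inj_on_restrict_seq:
  assumes A: "finite A"
  shows "inj_on (\<lambda>c. restrict_seq (spread R c) A) (set_pmf (coins (rep R ` A)))"
proof (rule inj_onI)
  fix c c' assume c: "c \<in> set_pmf (coins (rep R ` A))" and c': "c' \<in> set_pmf (coins (rep R ` A))"
    and eq: "restrict_seq (spread R c) A = restrict_seq (spread R c') A"
  have agree: "\<forall>i\<in>A. c (rep R i) = c' (rep R i)"
    using eq A unfolding restrict_seq_spread map_eq_conv by simp
  show "c = c'"
  proof
    fix x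
    show "c x = c' x"
    proof (cases "x \<in> rep R ` A")
      case True
      then show ?thesis using agree by blast
    next
      case False
      have fin: "finite (rep R ` A)" using A by simp
      from subsetD[OF set_pmf_coins[OF fin] c] subsetD[OF set_pmf_coins[OF fin] c'] False
      show ?thesis by simp
    qed
  qed
qed

section \<open>Bad events\<close>

definition bound :: "machine \<Rightarrow> (nat \<Rightarrow> nat \<Rightarrow> bool) \<Rightarrow> real \<Rightarrow> nat set \<Rightarrow> nat \<Rightarrow> real" where
  "bound U R \<gamma> A t = \<gamma> * real (free_bits R A) - real (KC U (set_encode A) t) - log 2 (real (class_size R t))"

definition bad :: "machine \<Rightarrow> (nat \<Rightarrow> nat \<Rightarrow> bool) \<Rightarrow> real \<Rightarrow> nat set \<Rightarrow> (nat \<Rightarrow> bool) set" where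
  "bad U R \<gamma> A = {c. \<forall>t\<in>A. real (KC U (bl_to_nat (restrict_seq (spread R c) A)) t) < bound U R \<gamma> A t}"

lemma depends_on_bad:
  assumes "finite A" shows "depends_on (rep R ` A) (bad U R \<gamma> A)"
proof (unfold depends_on_def, intro allI impI)
  fix c c' :: "nat \<Rightarrow> bool" assume "\<forall>v\<in>rep R ` A. c v = c' v"
  then have "restrict_seq (spread R c) A = restrict_seq (spread R c') A"
    by (rule depends_on_restrict_seq[OF assms])
  then show "(c \<in> bad U R \<gamma> A) = (c' \<in> bad U R \<gamma> A)" unfolding bad_def by simp
qed

text \<open>At most 2^L assignments of bits to the representatives of A make the bits of the spread
  sequence on A simpler than L given t: they are determined by these bits, and fewer than
  2^L words are that simple.\<close>
lemma card_low_complexity: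
  assumes U: "optimal_prefix_machine U" and A: "finite A"
  shows "real (card ({c. real (KC U (bl_to_nat (restrict_seq (spread R c) A)) t) < L}
                      \<inter> set_pmf (coins (rep R ` A)))) \<le> 2 powr L"
proof -
  let ?seq = "\<lambda>c. restrict_seq (spread R c) A"
  let ?Low = "{c. real (KC U (bl_to_nat (?seq c)) t) < L} \<inter> set_pmf (coins (rep R ` A))"
  define G where "G = {xs :: bool list. length xs = card A \<and> real (KC U (bl_to_nat xs) t) < L}"
  have "finite {xs :: bool list. length xs = card A}"
    using finite_lists_length_eq[of "UNIV :: bool set" "card A"] by simp
  then have fG: "finite G" by (rule finite_subset[rotated]) (auto simp: G_def)
  have "card ?Low \<le> card G"
  proof (rule card_inj_on_le[OF _ _ fG])
    show "inj_on ?seq ?Low"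
      using inj_on_restrict_seq[OF A] by (rule inj_on_subset) auto
    show "?seq ` ?Low \<subseteq> G"
      unfolding G_def by (auto simp: restrict_seq_spread)
  qed
  also have "card G = card (bl_to_nat ` G)"
    by (rule card_image[symmetric]) (rule inj_on_subset[OF inj_bl_to_nat], simp)
  finally have "real (card ?Low) \<le> real (card (bl_to_nat ` G))" by simp
  also have "\<dots> \<le> 2 powr L"
    by (rule KC_count[OF U]) (use fG in \<open>auto simp: G_def\<close>)
  finally show ?thesis .
qed

lemma prob_low_complexity:
  assumes U: "optimal_prefix_machine U" and E: "equivp R" and A: "finite A"
    and W: "finite W" and AW: "rep R ` A \<subseteq> W"
  shows "Prob W {c. real (KC U (bl_to_nat (restrict_seq (spread R c) A)) t) < L}
           \<le> 2 powr (L - real (free_bits R A))"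
proof -
  define V where "V = rep R ` A"
  let ?Low = "{c. real (KC U (bl_to_nat (restrict_seq (spread R c) A)) t) < L}"
  have fV: "finite V" unfolding V_def using A by simp
  have dep: "depends_on V ?Low"
  proof (unfold depends_on_def, intro allI impI)
    fix c c' :: "nat \<Rightarrow> bool" assume "\<forall>v\<in>V. c v = c' v"
    then have "restrict_seq (spread R c) A = restrict_seq (spread R c') A"
      unfolding V_def by (rule depends_on_restrict_seq[OF A])
    then show "(c \<in> ?Low) = (c' \<in> ?Low)" by simp
  qed
  have half: "(1/2::real) ^ card V = 2 powr (- real (free_bits R A))"
    unfolding V_def free_bits_rep[OF E] by (rule two_powr_minus_nat[symmetric])
  have "Prob W ?Low = Prob V ?Low"
    using AW unfolding V_def by (intro prob_restrict[OF W _ dep[unfolded V_def]])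
  also have "\<dots> = real (card (?Low \<inter> set_pmf (coins V))) * (1/2) ^ card V"
    by (rule prob_count[OF fV])
  also have "\<dots> \<le> 2 powr L * 2 powr (- real (free_bits R A))"
    unfolding half by (rule mult_right_mono[OF card_low_complexity[OF U A, where R = R and t = t and L = L, folded V_def]]) simp
  also have "\<dots> = 2 powr (L - real (free_bits R A))"
    by (simp add: powr_add[symmetric])
  finally show ?thesis .
qed

lemma prob_bad:
  assumes U: "optimal_prefix_machine U" and E: "equivp R" and A: "finite A" and t: "t \<in> A"
    and W: "finite W" and AW: "rep R ` A \<subseteq> W"
  shows "Prob W (bad U R \<gamma> A) \<le> 2 powr (bound U R \<gamma> A t - real (free_bits R A))"
proof -
  have "bad U R \<gamma> A \<subseteq> {c. real (KC U (bl_to_nat (restrict_seq (spread R c) A)) t) < bound U R \<gamma> A t}"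
  proof
    fix c assume "c \<in> bad U R \<gamma> A"
    then have "\<forall>s\<in>A. real (KC U (bl_to_nat (restrict_seq (spread R c) A)) s) < bound U R \<gamma> A s"
      unfolding bad_def by (rule CollectD)
    from bspec[OF this t]
    show "c \<in> {c. real (KC U (bl_to_nat (restrict_seq (spread R c) A)) t) < bound U R \<gamma> A t}"
      by (simp only: mem_Collect_eq)
  qed
  then have "Prob W (bad U R \<gamma> A)
      \<le> Prob W {c. real (KC U (bl_to_nat (restrict_seq (spread R c) A)) t) < bound U R \<gamma> A t}"
    by (rule measure_pmf.finite_measure_mono) simp
  also have "\<dots> \<le> 2 powr (bound U R \<gamma> A t - real (free_bits R A))"
    by (rule prob_low_complexity[OF U E A W AW])
  finally show ?thesis .
qed

section \<open>Weights for the local lemma\<close>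

definition weight :: "machine \<Rightarrow> (nat \<Rightarrow> nat \<Rightarrow> bool) \<Rightarrow> nat set \<Rightarrow> nat \<Rightarrow> real" where
  "weight U R A t = 2 powr (- real (KC U (set_encode A) t)) / real (class_size R t)"

definition min_weight :: "machine \<Rightarrow> (nat \<Rightarrow> nat \<Rightarrow> bool) \<Rightarrow> nat set \<Rightarrow> real" where
  "min_weight U R A = Min (weight U R A ` A)"

definition lll_weight :: "machine \<Rightarrow> (nat \<Rightarrow> nat \<Rightarrow> bool) \<Rightarrow> real \<Rightarrow> nat set \<Rightarrow> real" where
  "lll_weight U R \<delta> A = 2 powr (- \<delta> * real (free_bits R A)) * min_weight U R A"

lemma weight_bounds:
  assumes "equivp R" "\<forall>x. finite (eq_class R x)"
  shows "0 < weight U R A t" "weight U R A t \<le> 1"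
proof -
  have m: "real (class_size R t) \<ge> 1" using class_size_pos[OF assms, of t] by simp
  then show "0 < weight U R A t" unfolding weight_def by simp
  have "2 powr (- real (KC U (set_encode A) t)) \<le> 2 powr 0" by (intro powr_mono) auto
  then have "2 powr (- real (KC U (set_encode A) t)) \<le> real (class_size R t)" using m by simp
  then show "weight U R A t \<le> 1" unfolding weight_def using m by (simp add: divide_le_eq_1)
qed

lemma min_weight_le: "finite A \<Longrightarrow> t \<in> A \<Longrightarrow> min_weight U R A \<le> weight U R A t"
  unfolding min_weight_def by (rule Min_le) auto

lemma min_weight_attained:
  assumes "finite A" "A \<noteq> {}" shows "\<exists>t\<in>A. min_weight U R A = weight U R A t"
proof -
  have "Min (weight U R A ` A) \<in> weight U R A ` A" using assms by (intro Min_in) auto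
  then show ?thesis unfolding min_weight_def by auto
qed

lemma lll_weight_bounds:
  assumes E: "equivp R" and fc: "\<forall>x. finite (eq_class R x)" and dl: "\<delta> > 0"
    and A: "finite A" "A \<noteq> {}" "N \<le> free_bits R A"
  shows "0 < lll_weight U R \<delta> A" "lll_weight U R \<delta> A \<le> 2 powr (- \<delta> * real N)"
proof -
  obtain t where "t \<in> A" "min_weight U R A = weight U R A t"
    using min_weight_attained[OF A(1,2)] by blast
  then have mw: "0 < min_weight U R A" "min_weight U R A \<le> 1"
    using weight_bounds[OF E fc] by auto
  then show "0 < lll_weight U R \<delta> A" unfolding lll_weight_def by simp
  have "2 powr (- \<delta> * real (free_bits R A)) \<le> 2 powr (- \<delta> * real N)"
    using A dl by (intro powr_mono) auto
  from mult_mono[OF this mw(2)] mw(1)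
  show "lll_weight U R \<delta> A \<le> 2 powr (- \<delta> * real N)" unfolding lll_weight_def by simp
qed

text \<open>By Kraft's inequality, the weights of the sets containing a point s sum to at most
  2^(-delta N)/m(s).\<close>
lemma weight_through_point:
  assumes U: "optimal_prefix_machine U" and E: "equivp R" and fc: "\<forall>x. finite (eq_class R x)"
    and fin: "finite F" and Fp: "\<forall>B\<in>F. finite B \<and> B \<noteq> {} \<and> N \<le> free_bits R B" and dl: "\<delta> > 0"
  shows "(\<Sum>B\<in>{B\<in>F. s \<in> B}. lll_weight U R \<delta> B) \<le> 2 powr (- \<delta> * real N) / real (class_size R s)"
proof -
  define \<epsilon> where "\<epsilon> = 2 powr (- \<delta> * real N)"
  define Fs where "Fs = {B\<in>F. s \<in> B}"
  have "lll_weight U R \<delta> B \<le> \<epsilon> * weight U R B s" if "B \<in> Fs" for B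
  proof -
    have "2 powr (- \<delta> * real (free_bits R B)) \<le> \<epsilon>"
      unfolding \<epsilon>_def using Fp that dl by (intro powr_mono) (auto simp: Fs_def)
    moreover have "0 \<le> min_weight U R B" "min_weight U R B \<le> weight U R B s"
      using lll_weight_bounds[OF E fc dl, of B N U] Fp that min_weight_le[of B s U R]
      by (auto simp: Fs_def lll_weight_def zero_less_mult_iff)
    ultimately show ?thesis unfolding lll_weight_def \<epsilon>_def by (intro mult_mono) auto
  qed
  then have "(\<Sum>B\<in>Fs. lll_weight U R \<delta> B) \<le> (\<Sum>B\<in>Fs. \<epsilon> * weight U R B s)"
    by (rule sum_mono)
  also have "\<dots> = \<epsilon> / real (class_size R s) * (\<Sum>B\<in>Fs. 2 powr (- real (KC U (set_encode B) s)))"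
    by (simp add: weight_def sum_distrib_left)
  also have "(\<Sum>B\<in>Fs. 2 powr (- real (KC U (set_encode B) s))) = (\<Sum>x\<in>set_encode ` Fs. (1/2::real) ^ KC U x s)"
  proof -
    have "inj_on set_encode Fs"
      using Fp by (intro inj_on_subset[OF inj_on_set_encode]) (auto simp: Fs_def)
    then show ?thesis by (simp add: sum.reindex two_powr_minus_nat)
  qed
  also have "\<epsilon> / real (class_size R s) * (\<Sum>x\<in>set_encode ` Fs. (1/2::real) ^ KC U x s)
      \<le> \<epsilon> / real (class_size R s) * 1"
    using fin unfolding Fs_def \<epsilon>_def by (intro mult_left_mono KC_kraft[OF U]) auto
  finally show ?thesis unfolding Fs_def \<epsilon>_def by simp
qed

text \<open>The sets sharing a representative with A have total weight at most 2^(-delta N) f(A):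
  group them by a shared point s; each class carries total mass 1 of the weights 1/m(s).\<close>
lemma neighbour_weight_sum:
  assumes U: "optimal_prefix_machine U" and E: "equivp R" and fc: "\<forall>x. finite (eq_class R x)"
    and fin: "finite F" and Fp: "\<forall>B\<in>F. finite B \<and> B \<noteq> {} \<and> N \<le> free_bits R B"
    and dl: "\<delta> > 0" and A: "finite A"
  shows "(\<Sum>B\<in>{B\<in>F. B \<noteq> A \<and> rep R ` B \<inter> rep R ` A \<noteq> {}}. lll_weight U R \<delta> B)
           \<le> 2 powr (- \<delta> * real N) * real (free_bits R A)"
proof -
  define \<epsilon> where "\<epsilon> = 2 powr (- \<delta> * real N)"
  define w where "w = lll_weight U R \<delta>"
  define Nb where "Nb = {B\<in>F. B \<noteq> A \<and> rep R ` B \<inter> rep R ` A \<noteq> {}}"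
  define P where "P = Sigma (rep R ` A) (eq_class R)"
  have fP: "finite P" unfolding P_def using A fc by (intro finite_SigmaI) auto
  have fNb: "finite Nb" unfolding Nb_def using fin by simp
  have w_nonneg: "0 \<le> w B" if "B \<in> F" for B
    using lll_weight_bounds(1)[OF E fc dl, of B N U] Fp that unfolding w_def by fastforce
  have "(\<Sum>B\<in>Nb. w B) \<le> (\<Sum>B\<in>Nb. \<Sum>p\<in>{p\<in>P. snd p \<in> B}. w B)"
  proof (rule sum_mono)
    fix B assume B: "B \<in> Nb"
    then obtain b a where "b \<in> B" "a \<in> A" "rep R b = rep R a" unfolding Nb_def by auto
    then have "(rep R a, b) \<in> {p\<in>P. snd p \<in> B}"
      unfolding P_def eq_class_rep[OF E] using rep_rep[OF E] by auto
    then show "w B \<le> (\<Sum>p\<in>{p\<in>P. snd p \<in> B}. w B)"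
      using B fP w_nonneg unfolding Nb_def by (intro member_le_sum[where f = "\<lambda>_. w B"]) auto
  qed
  also have "\<dots> = (\<Sum>p\<in>P. \<Sum>B\<in>{B\<in>Nb. snd p \<in> B}. w B)"
    by (rule sum.swap_restrict[OF fNb fP])
  also have "\<dots> \<le> (\<Sum>p\<in>P. \<Sum>B\<in>{B\<in>F. snd p \<in> B}. w B)"
    using fin w_nonneg by (intro sum_mono sum_mono2) (auto simp: Nb_def)
  also have "\<dots> \<le> (\<Sum>p\<in>P. \<epsilon> / real (class_size R (snd p)))"
    using weight_through_point[OF U E fc fin Fp dl] unfolding w_def \<epsilon>_def by (intro sum_mono)
  also have "\<dots> = (\<Sum>v\<in>rep R ` A. \<Sum>s\<in>eq_class R v. \<epsilon> / real (class_size R s))"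
    unfolding P_def using sum.Sigma[of "rep R ` A" "eq_class R" "\<lambda>_ s. \<epsilon> / real (class_size R s)"] A fc
    by (simp add: case_prod_unfold)
  also have "\<dots> = (\<Sum>v\<in>rep R ` A. \<epsilon> * (\<Sum>s\<in>eq_class R v. 1 / real (class_size R s)))"
    by (simp add: sum_distrib_left)
  also have "\<dots> = \<epsilon> * real (free_bits R A)"
    by (simp add: sum_inverse_class_size[OF E fc] free_bits_rep[OF E])
  finally show ?thesis unfolding Nb_def w_def \<epsilon>_def .
qed

lemma exp_le_prod_one_minus:
  fixes y :: "'a \<Rightarrow> real"
  assumes fin: "finite I" and y: "\<forall>B\<in>I. 0 \<le> y B \<and> y B \<le> 1/2"
  shows "exp (- 2 * (\<Sum>B\<in>I. y B)) \<le> (\<Prod>B\<in>I. 1 - y B)"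
proof -
  have "exp (- 2 * y B) \<le> 1 - y B" if "B \<in> I" for B
  proof -
    have yB: "0 \<le> y B" "y B \<le> 1/2" using y that by auto
    then have pos: "0 < 1 + 2 * y B" by simp
    have "1 + 2 * y B \<le> exp (2 * y B)" by (rule exp_ge_add_one_self)
    then have "exp (- 2 * y B) \<le> 1 / (1 + 2 * y B)"
      using pos by (simp add: exp_minus inverse_eq_divide divide_le_eq_1 field_simps)
    also have "\<dots> \<le> 1 - y B"
    proof -
      have "y B * (2 * y B) \<le> y B * 1" using yB by (intro mult_left_mono) auto
      then have "1 \<le> (1 - y B) * (1 + 2 * y B)" by (simp add: algebra_simps)
      then show ?thesis using pos by (simp add: divide_le_eq)
    qed
    finally show ?thesis .
  qed
  then have "(\<Prod>B\<in>I. exp (- 2 * y B)) \<le> (\<Prod>B\<in>I. 1 - y B)" by (intro prod_mono) auto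
  then show ?thesis by (simp add: sum_distrib_left exp_sum[OF fin])
qed

lemma prob_bad_weight:
  assumes U: "optimal_prefix_machine U" and E: "equivp R" and fc: "\<forall>x. finite (eq_class R x)"
    and A: "finite A" "A \<noteq> {}" and W: "finite W" and AW: "rep R ` A \<subseteq> W"
    and g: "\<gamma> = 1 - 2 * \<delta>"
  shows "Prob W (bad U R \<gamma> A) \<le> 2 powr (- \<delta> * real (free_bits R A)) * lll_weight U R \<delta> A"
proof -
  obtain t where t: "t \<in> A" "min_weight U R A = weight U R A t"
    using min_weight_attained[OF A] by blast
  define f where "f = real (free_bits R A)"
  define K where "K = real (KC U (set_encode A) t)"
  define m where "m = real (class_size R t)"
  have m: "m \<ge> 1" unfolding m_def using class_size_pos[OF E fc, of t] by simp
  have "bound U R \<gamma> A t - f = - \<delta> * f + (- \<delta> * f + - K) - log 2 m"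
    unfolding bound_def g f_def K_def m_def by (simp add: algebra_simps)
  then have "2 powr (bound U R \<gamma> A t - f) = 2 powr (- \<delta> * f + (- \<delta> * f + - K) - log 2 m)"
    by (simp only:)
  also have "\<dots> = 2 powr (- \<delta> * f) * (2 powr (- \<delta> * f) * 2 powr (- K)) / 2 powr (log 2 m)"
    by (simp only: powr_diff powr_add)
  also have "\<dots> = 2 powr (- \<delta> * f) * (2 powr (- \<delta> * f) * 2 powr (- K)) / m"
    using m by simp
  also have "\<dots> = 2 powr (- \<delta> * f) * lll_weight U R \<delta> A"
    unfolding lll_weight_def t(2) weight_def f_def K_def m_def by simp
  finally show ?thesis
    using prob_bad[OF U E A(1) t(1) W AW, of \<gamma>] unfolding f_def by simp
qed

lemma lll_condition:
  assumes U: "optimal_prefix_machine U" and E: "equivp R" and fc: "\<forall>x. finite (eq_class R x)"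
    and fin: "finite F" and Fp: "\<forall>B\<in>F. finite B \<and> B \<noteq> {} \<and> N \<le> free_bits R B"
    and W: "finite W" and FW: "\<forall>B\<in>F. rep R ` B \<subseteq> W" and AF: "A \<in> F"
    and dl: "\<delta> > 0" and g: "\<gamma> = 1 - 2 * \<delta>"
    and small: "2 powr (- \<delta> * real N) \<le> 1/2" and tiny: "2 * 2 powr (- \<delta> * real N) \<le> \<delta> * ln 2"
  shows "Prob W (bad U R \<gamma> A) \<le> lll_weight U R \<delta> A *
           (\<Prod>B\<in>{B\<in>F. B \<noteq> A \<and> rep R ` B \<inter> rep R ` A \<noteq> {}}. 1 - lll_weight U R \<delta> B)"
proof -
  define \<epsilon> where "\<epsilon> = 2 powr (- \<delta> * real N)"
  define f where "f = real (free_bits R A)"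
  define Nb where "Nb = {B\<in>F. B \<noteq> A \<and> rep R ` B \<inter> rep R ` A \<noteq> {}}"
  have A: "finite A" "A \<noteq> {}" using Fp AF by auto
  have w_bounds: "0 \<le> lll_weight U R \<delta> B \<and> lll_weight U R \<delta> B \<le> 1/2" if "B \<in> F" for B
    using lll_weight_bounds[OF E fc dl, of B N U] Fp that small by fastforce
  have "2 powr (- \<delta> * f) = exp (- (\<delta> * ln 2) * f)" by (simp add: powr_def)
  also have "\<dots> \<le> exp (- 2 * (\<epsilon> * f))"
    using mult_right_mono[OF tiny, of f] unfolding \<epsilon>_def f_def by simp
  also have "\<dots> \<le> exp (- 2 * (\<Sum>B\<in>Nb. lll_weight U R \<delta> B))"
    using neighbour_weight_sum[OF U E fc fin Fp dl A(1)] unfolding Nb_def \<epsilon>_def f_def by simp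
  also have "\<dots> \<le> (\<Prod>B\<in>Nb. 1 - lll_weight U R \<delta> B)"
    using fin w_bounds by (intro exp_le_prod_one_minus) (auto simp: Nb_def)
  finally have "2 powr (- \<delta> * f) \<le> (\<Prod>B\<in>Nb. 1 - lll_weight U R \<delta> B)" .
  then have "2 powr (- \<delta> * f) * lll_weight U R \<delta> A \<le> (\<Prod>B\<in>Nb. 1 - lll_weight U R \<delta> B) * lll_weight U R \<delta> A"
    using w_bounds[OF AF] by (intro mult_right_mono) auto
  then show ?thesis
    using prob_bad_weight[OF U E fc A W FW[rule_format, OF AF] g] unfolding Nb_def f_def
    by (simp add: mult.commute)
qed

lemma small_parameter:
  fixes \<delta> :: real
  assumes "\<delta> > 0"
  obtains N :: nat where "N \<ge> 1" "2 powr (- \<delta> * real N) \<le> 1/2" "2 * 2 powr (- \<delta> * real N) \<le> \<delta> * ln 2"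
proof -
  have "((\<lambda>n. 2 powr (- \<delta> * real n)) \<longlongrightarrow> 0) at_top"
    using assms by real_asymp
  moreover have "0 < min (1/2) (\<delta> * ln 2 / 2)" using assms by simp
  ultimately have "eventually (\<lambda>n. 2 powr (- \<delta> * real n) < min (1/2) (\<delta> * ln 2 / 2)) at_top"
    by (rule order_tendstoD)
  then obtain N0 where N0: "\<And>n. n \<ge> N0 \<Longrightarrow> 2 powr (- \<delta> * real n) < min (1/2) (\<delta> * ln 2 / 2)"
    unfolding eventually_at_top_linorder by blast
  show ?thesis using N0[of "max N0 1"] by (intro that[of "max N0 1"]) auto
qed

lemma finite_family_avoidable:
  assumes U: "optimal_prefix_machine U" and E: "equivp R" and fc: "\<forall>x. finite (eq_class R x)"
    and dl: "\<delta> > 0" and g: "\<gamma> = 1 - 2 * \<delta>" and N: "N \<ge> 1"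
    and small: "2 powr (- \<delta> * real N) \<le> 1/2" and tiny: "2 * 2 powr (- \<delta> * real N) \<le> \<delta> * ln 2"
    and fin: "finite F" and F: "\<forall>B\<in>F. finite B \<and> N \<le> free_bits R B"
  shows "(\<Inter>A\<in>F. - bad U R \<gamma> A) \<noteq> {}"
proof -
  define W where "W = (\<Union>B\<in>F. rep R ` B)"
  have Fp: "\<forall>B\<in>F. finite B \<and> B \<noteq> {} \<and> N \<le> free_bits R B"
    using F N free_bits_rep[OF E, of "{}"] by force
  have W_fin: "finite W" and FW: "\<forall>B\<in>F. rep R ` B \<subseteq> W"
    unfolding W_def using fin F by auto
  have w: "0 < lll_weight U R \<delta> A \<and> lll_weight U R \<delta> A \<le> 1/2" if "A \<in> F" for A
    using lll_weight_bounds[OF E fc dl, of A N U] Fp that small by auto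
  have "(\<Prod>A\<in>F. 1 - lll_weight U R \<delta> A) \<le> Prob W (\<Inter>A\<in>F. - bad U R \<gamma> A)"
  proof (rule lovasz_local_lemma[OF W_fin fin FW])
    show "\<forall>A\<in>F. depends_on (rep R ` A) (bad U R \<gamma> A)"
      using F by (simp add: depends_on_bad)
    show "\<forall>A\<in>F. 0 \<le> lll_weight U R \<delta> A \<and> lll_weight U R \<delta> A < 1"
      using w by fastforce
    show "\<forall>A\<in>F. Prob W (bad U R \<gamma> A) \<le> lll_weight U R \<delta> A *
            (\<Prod>B\<in>{B\<in>F. B \<noteq> A \<and> rep R ` B \<inter> rep R ` A \<noteq> {}}. 1 - lll_weight U R \<delta> B)"
      by (intro ballI lll_condition[OF U E fc fin Fp W_fin FW _ dl g small tiny])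
  qed
  moreover have "0 < (\<Prod>A\<in>F. 1 - lll_weight U R \<delta> A)"
    using w by (intro prod_pos) fastforce
  ultimately show ?thesis by auto
qed

text \<open>By compactness, a single assignment avoids the bad events of all finite sets with at
  least N free bits.\<close>
lemma all_bad_events_avoidable:
  assumes U: "optimal_prefix_machine U" and E: "equivp R" and fc: "\<forall>x. finite (eq_class R x)"
    and dl: "\<delta> > 0" and g: "\<gamma> = 1 - 2 * \<delta>" and N: "N \<ge> 1"
    and small: "2 powr (- \<delta> * real N) \<le> 1/2" and tiny: "2 * 2 powr (- \<delta> * real N) \<le> \<delta> * ln 2"
  shows "\<exists>c. \<forall>A. finite A \<and> N \<le> free_bits R A \<longrightarrow> c \<notin> bad U R \<gamma> A"
proof -
  define Fk where "Fk k = {A \<in> set_decode ` {..<k}. N \<le> free_bits R A}" for k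
  define Ck where "Ck k = (\<Inter>A\<in>Fk k. - bad U R \<gamma> A)" for k
  have "\<exists>c. \<forall>k. c \<in> Ck k"
  proof (rule compact_nested)
    show "Ck k \<noteq> {}" for k
      unfolding Ck_def Fk_def
      by (rule finite_family_avoidable[OF U E fc dl g N small tiny]) auto
    show "Ck k' \<subseteq> Ck k" if "k \<le> k'" for k k'
      using that unfolding Ck_def Fk_def by auto
    show "\<exists>M. finite M \<and> depends_on M (Ck k)" for k
    proof (intro exI conjI)
      show "finite (\<Union>A\<in>Fk k. rep R ` A)" unfolding Fk_def by auto
      show "depends_on (\<Union>A\<in>Fk k. rep R ` A) (Ck k)"
        unfolding Ck_def
        by (intro depends_on_INT depends_on_Compl depends_on_mono[OF depends_on_bad])
          (auto simp: Fk_def)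
    qed
  qed
  then obtain c where c: "\<forall>k. c \<in> Ck k" by blast
  have "c \<notin> bad U R \<gamma> A" if "finite A" "N \<le> free_bits R A" for A
  proof -
    have "A \<in> Fk (Suc (set_encode A))"
      unfolding Fk_def using that by (auto intro!: image_eqI[where x = "set_encode A"])
    then show ?thesis using c unfolding Ck_def by blast
  qed
  then show ?thesis by blast
qed

theorem theorem3:
  fixes R :: "nat \<Rightarrow> nat \<Rightarrow> bool" and \<gamma> :: real and U :: machine
  assumes "optimal_prefix_machine U"
    and "equivp R"
    and "\<forall>x. finite (eq_class R x)"
    and "decidable_rel R"
    and "\<exists>g. computable1 g \<and> (\<forall>x. g x = set_encode (eq_class R x))"
    and "0 < \<gamma>" and "\<gamma> < 1"
  shows "\<exists>\<omega> :: nat \<Rightarrow> bool. \<exists>N :: nat. follows R \<omega> \<and>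
    (\<forall>A. finite A \<and> free_bits R A \<ge> N \<longrightarrow>
       (\<exists>t\<in>A. real (KC U (bl_to_nat (restrict_seq \<omega> A)) t)
              \<ge> \<gamma> * real (free_bits R A) - real (KC U (set_encode A) t)
                 - log 2 (real (class_size R t))))"
proof -
  define \<delta> where "\<delta> = (1 - \<gamma>) / 2"
  have dl: "\<delta> > 0" using assms(7) unfolding \<delta>_def by simp
  have g: "\<gamma> = 1 - 2 * \<delta>" unfolding \<delta>_def by (simp add: field_simps)
  obtain N where N: "N \<ge> 1" "2 powr (- \<delta> * real N) \<le> 1/2" "2 * 2 powr (- \<delta> * real N) \<le> \<delta> * ln 2"
    using small_parameter[OF dl] by blast
  obtain c where c: "\<forall>A. finite A \<and> N \<le> free_bits R A \<longrightarrow> c \<notin> bad U R \<gamma> A"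
    using all_bad_events_avoidable[OF assms(1-3) dl g N] by blast
  have "follows R (spread R c)" by (rule follows_spread[OF assms(2)])
  moreover have "\<exists>t\<in>A. real (KC U (bl_to_nat (restrict_seq (spread R c) A)) t) \<ge> bound U R \<gamma> A t"
    if "finite A" "free_bits R A \<ge> N" for A
    using c that unfolding bad_def by (auto simp: not_less)
  ultimately show ?thesis unfolding bound_def by blast
qed

end
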